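(* Let $V$ be a vertex operator algebra. Any $C_1$-cofinite $\mathbb N$-gradable weak $V$-module is finitely generated.
   Context: A weak $V$-module $W$ is $\mathbb N$-gradable if there is a grading $W=\bigoplus_{n\in\mathbb N}W(n)$ with $v_mW(n)\subseteq W(\mathrm{wt}\,v+n-m-1)$ for homogeneous $v\in V$ and all $m\in\mathbb Z$ (where $Y_W(v,x)=\sum_m v_mx^{-m-1}$). $C_1(W)=\mathrm{span}\{v_{-1}w: v\in\bigoplus_{n\ge1}V_{(n)},\ w\in W\}$, and $W$ is $C_1$-cofinite if $\dim W/C_1(W)<\infty$. *)

theory Defs
  imports Complex_Main
begin

text \<open>Vector spaces over the complex numbers are modelled as a type of class
ab_group_add together with an explicit scalar multiplication sc satisfying the
library locale Vector_Spaces.vector_space.  Vertex operators are given by their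
modes: Y v n u is the coefficient v_n u of x^(-n-1) in Y(v,x)u.\<close>

text \<open>Sum of a finitely supported family (all sums below are finite by truncation).\<close>
definition fsum :: "(nat \<Rightarrow> 'a::comm_monoid_add) \<Rightarrow> 'a" where
  "fsum f = sum f {i. f i \<noteq> 0}"

definition modes_linear ::
  "(complex \<Rightarrow> 'v::ab_group_add \<Rightarrow> 'v) \<Rightarrow> (complex \<Rightarrow> 'w::ab_group_add \<Rightarrow> 'w)
   \<Rightarrow> ('v \<Rightarrow> int \<Rightarrow> 'w \<Rightarrow> 'w) \<Rightarrow> bool" where
  "modes_linear sc scW YW \<longleftrightarrow>
     (\<forall>v n. Vector_Spaces.linear scW scW (YW v n)) \<and>
     (\<forall>n w. Vector_Spaces.linear sc scW (\<lambda>v. YW v n w))"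

definition truncation :: "('v \<Rightarrow> int \<Rightarrow> 'w \<Rightarrow> 'w::zero) \<Rightarrow> bool" where
  "truncation YW \<longleftrightarrow> (\<forall>v w. \<exists>N. \<forall>n\<ge>N. YW v n w = 0)"

definition borcherds ::
  "(complex \<Rightarrow> 'w::ab_group_add \<Rightarrow> 'w) \<Rightarrow> ('v \<Rightarrow> int \<Rightarrow> 'v \<Rightarrow> 'v)
   \<Rightarrow> ('v \<Rightarrow> int \<Rightarrow> 'w \<Rightarrow> 'w) \<Rightarrow> bool" where
  "borcherds scW Y YW \<longleftrightarrow>
    (\<forall>u v w p q r.
      fsum (\<lambda>i::nat. scW ((of_int p :: complex) gchoose i)
                        (YW (Y u (r + int i) v) (p + q - int i) w))
    = fsum (\<lambda>i::nat. scW ((-1) ^ i * ((of_int r :: complex) gchoose i))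
                        (YW u (p + r - int i) (YW v (q + int i) w)
                         - scW ((-1 :: complex) powi r)
                              (YW v (q + r - int i) (YW u (p + int i) w)))))"

text \<open>The weight space V_(n): the eigenspace of L(0) = omega_1 for the eigenvalue n.\<close>
definition wt_space ::
  "(complex \<Rightarrow> 'v::ab_group_add \<Rightarrow> 'v) \<Rightarrow> ('v \<Rightarrow> int \<Rightarrow> 'v \<Rightarrow> 'v) \<Rightarrow> 'v \<Rightarrow> int \<Rightarrow> 'v set" where
  "wt_space sc Y \<omega> n = {v. Y \<omega> 1 v = sc (of_int n) v}"

text \<open>Vertex operator algebra (V, Y, 1, omega) of central charge c over the complex
numbers, in the sense of Frenkel-Lepowsky-Meurman / Lepowsky-Li.
L(n) = omega_{n+1}.\<close>
definition vertex_operator_algebra ::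
  "(complex \<Rightarrow> 'v::ab_group_add \<Rightarrow> 'v) \<Rightarrow> ('v \<Rightarrow> int \<Rightarrow> 'v \<Rightarrow> 'v) \<Rightarrow> 'v \<Rightarrow> 'v \<Rightarrow> complex \<Rightarrow> bool" where
  "vertex_operator_algebra sc Y vac \<omega> c \<longleftrightarrow>
     Vector_Spaces.vector_space sc \<and>
     modes_linear sc sc Y \<and>
     \<comment> \<open>V is the direct sum of the L(0)-eigenspaces V_(n), n integer\<close>
     (\<forall>v. v \<in> module.span sc (\<Union>n. wt_space sc Y \<omega> n)) \<and>
     \<comment> \<open>each V_(n) is finite dimensional\<close>
     (\<forall>n. \<exists>B. finite B \<and> wt_space sc Y \<omega> n \<subseteq> module.span sc B) \<and>
     \<comment> \<open>V_(n) = 0 for n sufficiently negative\<close>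
     (\<exists>N. \<forall>n<N. wt_space sc Y \<omega> n = {0}) \<and>
     truncation Y \<and>
     \<comment> \<open>vacuum property Y(1,x) = id\<close>
     (\<forall>n w. Y vac n w = (if n = -1 then w else 0)) \<and>
     \<comment> \<open>creation property\<close>
     (\<forall>v. Y v (-1) vac = v \<and> (\<forall>n\<ge>0. Y v n vac = 0)) \<and>
     borcherds sc Y Y \<and>
     \<omega> \<in> wt_space sc Y \<omega> 2 \<and>
     \<comment> \<open>Virasoro relations\<close>
     (\<forall>m n v. Y \<omega> (m + 1) (Y \<omega> (n + 1) v) - Y \<omega> (n + 1) (Y \<omega> (m + 1) v)
        = sc (of_int (m - n)) (Y \<omega> (m + n + 1) v)
          + (if m + n = 0 then sc ((of_int m ^ 3 - of_int m) / 12 * c) v else 0)) \<and>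
     \<comment> \<open>L(-1)-derivative property: Y(L(-1)v,x) = d/dx Y(v,x)\<close>
     (\<forall>v n w. Y (Y \<omega> 0 v) n w = sc (- of_int n) (Y v (n - 1) w))"

definition weak_module ::
  "(complex \<Rightarrow> 'v::ab_group_add \<Rightarrow> 'v) \<Rightarrow> ('v \<Rightarrow> int \<Rightarrow> 'v \<Rightarrow> 'v) \<Rightarrow> 'v
   \<Rightarrow> (complex \<Rightarrow> 'w::ab_group_add \<Rightarrow> 'w) \<Rightarrow> ('v \<Rightarrow> int \<Rightarrow> 'w \<Rightarrow> 'w) \<Rightarrow> bool" where
  "weak_module sc Y vac scW YW \<longleftrightarrow>
     Vector_Spaces.vector_space scW \<and>
     modes_linear sc scW YW \<and>
     truncation YW \<and>
     (\<forall>n w. YW vac n w = (if n = -1 then w else 0)) \<and>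
     borcherds scW Y YW"

definition nat_direct_sum :: "(complex \<Rightarrow> 'w::ab_group_add \<Rightarrow> 'w) \<Rightarrow> (nat \<Rightarrow> 'w set) \<Rightarrow> bool" where
  "nat_direct_sum scW G \<longleftrightarrow>
     (\<forall>n. module.subspace scW (G n)) \<and>
     (\<forall>w. w \<in> module.span scW (\<Union>n. G n)) \<and>
     (\<forall>f. finite {n. f n \<noteq> 0} \<longrightarrow> (\<forall>n. f n \<in> G n) \<longrightarrow> sum f {n. f n \<noteq> 0} = 0
          \<longrightarrow> (\<forall>n. f n = 0))"

definition N_gradable ::
  "(complex \<Rightarrow> 'v::ab_group_add \<Rightarrow> 'v) \<Rightarrow> ('v \<Rightarrow> int \<Rightarrow> 'v \<Rightarrow> 'v) \<Rightarrow> 'v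
   \<Rightarrow> (complex \<Rightarrow> 'w::ab_group_add \<Rightarrow> 'w) \<Rightarrow> ('v \<Rightarrow> int \<Rightarrow> 'w \<Rightarrow> 'w) \<Rightarrow> bool" where
  "N_gradable sc Y \<omega> scW YW \<longleftrightarrow>
     (\<exists>G :: nat \<Rightarrow> 'w set. nat_direct_sum scW G \<and>
        (\<forall>v k n m w. v \<in> wt_space sc Y \<omega> k \<longrightarrow> w \<in> G n \<longrightarrow>
            YW v m w \<in> (if k + int n - m - 1 \<ge> 0 then G (nat (k + int n - m - 1)) else {0})))"

definition C1 ::
  "(complex \<Rightarrow> 'v::ab_group_add \<Rightarrow> 'v) \<Rightarrow> ('v \<Rightarrow> int \<Rightarrow> 'v \<Rightarrow> 'v) \<Rightarrow> 'v
   \<Rightarrow> (complex \<Rightarrow> 'w::ab_group_add \<Rightarrow> 'w) \<Rightarrow> ('v \<Rightarrow> int \<Rightarrow> 'w \<Rightarrow> 'w) \<Rightarrow> 'w set" where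
  "C1 sc Y \<omega> scW YW =
     module.span scW {YW v (-1) w | v w.
        v \<in> module.span sc (\<Union>n\<in>{1..}. wt_space sc Y \<omega> n)}"

text \<open>dim W / C_1(W) is finite: finitely many vectors span W modulo C_1(W).\<close>
definition C1_cofinite ::
  "(complex \<Rightarrow> 'v::ab_group_add \<Rightarrow> 'v) \<Rightarrow> ('v \<Rightarrow> int \<Rightarrow> 'v \<Rightarrow> 'v) \<Rightarrow> 'v
   \<Rightarrow> (complex \<Rightarrow> 'w::ab_group_add \<Rightarrow> 'w) \<Rightarrow> ('v \<Rightarrow> int \<Rightarrow> 'w \<Rightarrow> 'w) \<Rightarrow> bool" where
  "C1_cofinite sc Y \<omega> scW YW \<longleftrightarrow>
     (\<exists>S. finite S \<and> module.span scW (S \<union> C1 sc Y \<omega> scW YW) = UNIV)"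

definition submodule ::
  "(complex \<Rightarrow> 'w::ab_group_add \<Rightarrow> 'w) \<Rightarrow> ('v \<Rightarrow> int \<Rightarrow> 'w \<Rightarrow> 'w) \<Rightarrow> 'w set \<Rightarrow> bool" where
  "submodule scW YW U \<longleftrightarrow> module.subspace scW U \<and> (\<forall>v n w. w \<in> U \<longrightarrow> YW v n w \<in> U)"

definition generated_submodule ::
  "(complex \<Rightarrow> 'w::ab_group_add \<Rightarrow> 'w) \<Rightarrow> ('v \<Rightarrow> int \<Rightarrow> 'w \<Rightarrow> 'w) \<Rightarrow> 'w set \<Rightarrow> 'w set" where
  "generated_submodule scW YW S = \<Inter>{U. submodule scW YW U \<and> S \<subseteq> U}"

definition finitely_generated ::
  "(complex \<Rightarrow> 'w::ab_group_add \<Rightarrow> 'w) \<Rightarrow> ('v \<Rightarrow> int \<Rightarrow> 'w \<Rightarrow> 'w) \<Rightarrow> bool" where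
  "finitely_generated scW YW \<longleftrightarrow> (\<exists>S. finite S \<and> generated_submodule scW YW S = UNIV)"

end

theory Submission
  imports Defs
begin

text \<open>Choose finitely many homogeneous vectors spanning W modulo C_1(W).  Every generator
v_{-1} u of C_1(W) with v of weight k \<ge> 1 lies in degree deg u + k, so modulo lower degrees
each homogeneous component W(n) is spanned by the chosen vectors of degree n.  By induction
on n, every W(n) lies in the submodule generated by the chosen vectors.\<close>

context module
begin

lemma span_UN_decomp:
  assumes "x \<in> span (\<Union>m. A m)"
  shows "\<exists>f F. finite F \<and> (\<forall>m. f m \<in> span (A m)) \<and> (\<forall>m. m \<notin> F \<longrightarrow> f m = 0) \<and> x = sum f F"
  using assms
proof (induction rule: span_induct_alt)
  case base
  show ?case by (intro exI[of _ "\<lambda>_. 0"] exI[of _ "{}"]) (auto simp: span_zero)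
next
  case (step c x y)
  then obtain f F where F: "finite F" and f: "\<forall>m. f m \<in> span (A m)"
    and supp: "\<forall>m. m \<notin> F \<longrightarrow> f m = 0" and y: "y = sum f F"
    by blast
  from step(1) obtain m0 where m0: "x \<in> A m0" by blast
  define f' where "f' = f(m0 := c *s x + f m0)"
  have "\<forall>m. f' m \<in> span (A m)"
    using f m0 by (auto simp: f'_def intro: span_add span_scale span_base)
  moreover have "\<forall>m. m \<notin> insert m0 F \<longrightarrow> f' m = 0"
    using supp by (auto simp: f'_def)
  moreover have "sum f (insert m0 F) = sum f F"
    using F supp by (cases "m0 \<in> F") (auto simp: insert_absorb)
  then have "c *s x + y = sum f' (insert m0 F)"
    using F by (simp add: y f'_def sum.insert_remove add.assoc)
  ultimately show ?case using F by (intro exI[of _ f'] exI[of _ "insert m0 F"]) auto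
qed

lemma finite_subset_span_finite:
  assumes "finite S" "S \<subseteq> span X"
  shows "\<exists>T. finite T \<and> T \<subseteq> X \<and> S \<subseteq> span T"
  using assms
proof (induction S rule: finite_induct)
  case empty
  show ?case by blast
next
  case (insert s S)
  then obtain T where T: "finite T" "T \<subseteq> X" "S \<subseteq> span T" by blast
  from insert.prems obtain t r where t: "finite t" "t \<subseteq> X" and s: "s = (\<Sum>a\<in>t. r a *s a)"
    unfolding span_explicit by blast
  have "s \<in> span t" unfolding s by (intro span_sum span_scale span_base)
  then have "insert s S \<subseteq> span (T \<union> t)"
    using T(3) span_mono[of T "T \<union> t"] span_mono[of t "T \<union> t"] by blast
  then show ?case using T t by (intro exI[of _ "T \<union> t"]) auto
qed

text \<open>Compare a decomposition of w along the A m with the trivial one in the direct sum.\<close>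
lemma direct_sum_component_span:
  assumes subs: "\<And>m. subspace (G m)"
    and indep: "\<And>g. finite {m. g m \<noteq> 0} \<Longrightarrow> \<forall>m. g m \<in> G m \<Longrightarrow> sum g {m. g m \<noteq> 0} = 0
                  \<Longrightarrow> \<forall>m. g m = 0"
    and AG: "\<And>m. A m \<subseteq> G m"
    and spans: "span (\<Union>m. A m) = UNIV"
    and w: "w \<in> G n"
  shows "w \<in> span (A n)"
proof -
  obtain f F where F: "finite F" and f: "\<forall>m. f m \<in> span (A m)"
    and supp: "\<forall>m. m \<notin> F \<longrightarrow> f m = 0" and w_sum: "w = sum f F"
    using span_UN_decomp[of w A] spans by blast
  define g where "g m = f m - (if m = n then w else 0)" for m
  have "\<forall>m. g m \<in> G m"
  proof
    fix m
    have "f m \<in> G m" using f span_minimal[OF AG subs] by blast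
    then show "g m \<in> G m" using w subs by (auto simp: g_def intro: subspace_diff)
  qed
  moreover have g_supp: "{m. g m \<noteq> 0} \<subseteq> insert n F" using supp by (auto simp: g_def)
  moreover have "sum f (insert n F) = sum f F"
    using F supp by (cases "n \<in> F") (auto simp: insert_absorb)
  then have "sum g (insert n F) = 0"
    using F by (simp add: g_def sum_subtractf w_sum sum.delta)
  then have "sum g {m. g m \<noteq> 0} = 0"
    using g_supp F by (subst sum.mono_neutral_left[of "insert n F"]) auto
  ultimately have "\<forall>m. g m = 0" using F by (intro indep) (auto intro: finite_subset)
  then have "f n = w" by (auto simp: g_def dest: spec[of _ n])
  then show ?thesis using f by metis
qed

end

locale N_graded_weak_module =
  V: vector_space sc + W: vector_space scW
  for sc :: "complex \<Rightarrow> 'v::ab_group_add \<Rightarrow> 'v" and scW :: "complex \<Rightarrow> 'w::ab_group_add \<Rightarrow> 'w" +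
  fixes Y :: "'v \<Rightarrow> int \<Rightarrow> 'v \<Rightarrow> 'v" and \<omega> :: 'v
    and YW :: "'v \<Rightarrow> int \<Rightarrow> 'w \<Rightarrow> 'w" and G :: "nat \<Rightarrow> 'w set"
  assumes modes_linear: "modes_linear sc scW YW"
    and direct_sum: "nat_direct_sum scW G"
    and grading: "\<And>v k n m w. v \<in> wt_space sc Y \<omega> k \<Longrightarrow> w \<in> G n \<Longrightarrow>
            YW v m w \<in> (if k + int n - m - 1 \<ge> 0 then G (nat (k + int n - m - 1)) else {0})"
begin

lemma mode_hom: "module_hom scW scW (YW v n)"
  and mode_hom_left: "module_hom sc scW (\<lambda>v. YW v n w)"
  using modes_linear by (simp_all add: modes_linear_def module_hom_iff_linear)

lemma span_grades: "W.span (\<Union>n. G n) = UNIV"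
  using direct_sum by (auto simp: nat_direct_sum_def)

lemma grade_subspace: "W.subspace (G n)"
  and grade_independent: "finite {n. g n \<noteq> 0} \<Longrightarrow> \<forall>n. g n \<in> G n \<Longrightarrow> sum g {n. g n \<noteq> 0} = 0
                            \<Longrightarrow> \<forall>n. g n = 0"
  using direct_sum unfolding nat_direct_sum_def by blast+

lemma minus_one_mode_grade:
  assumes "v \<in> wt_space sc Y \<omega> k" "0 \<le> k" "u \<in> G n"
  shows "YW v (-1) u \<in> G (n + nat k)"
proof -
  have "k + int n - (-1) - 1 = int (n + nat k)" using assms(2) by simp
  then show ?thesis using grading[OF assms(1,3), of "-1"] by (simp del: of_nat_add)
qed

definition C1_part :: "nat \<Rightarrow> 'w set" where
  "C1_part m = {YW v (-1) u | v u k n. 1 \<le> k \<and> v \<in> wt_space sc Y \<omega> k \<and> u \<in> G n \<and> n + nat k = m}"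

lemma C1_part_subset_grade: "C1_part m \<subseteq> G m"
  using minus_one_mode_grade by (auto simp: C1_part_def)

lemma C1_subset_span_C1_part: "C1 sc Y \<omega> scW YW \<subseteq> W.span (\<Union>m. C1_part m)"
  unfolding C1_def
proof (intro W.span_minimal subsetI W.subspace_span, clarify)
  let ?P = "W.span (\<Union>m. C1_part m)"
  fix v w assume v: "v \<in> V.span (\<Union>k\<in>{1..}. wt_space sc Y \<omega> k)"
  have "(\<Union>k\<in>{1..}. wt_space sc Y \<omega> k) \<subseteq> (\<lambda>v. YW v (-1) w) -` ?P"
  proof
    fix v assume "v \<in> (\<Union>k\<in>{1..}. wt_space sc Y \<omega> k)"
    then obtain k where k: "1 \<le> k" "v \<in> wt_space sc Y \<omega> k" by auto
    have "(\<Union>n. G n) \<subseteq> YW v (-1) -` ?P"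
      using k by (fastforce simp: C1_part_def intro: W.span_base)
    then have "W.span (\<Union>n. G n) \<subseteq> YW v (-1) -` ?P"
      by (intro W.span_minimal module_hom.subspace_vimage[OF mode_hom] W.subspace_span)
    then show "v \<in> (\<lambda>v. YW v (-1) w) -` ?P" using span_grades by auto
  qed
  then have "V.span (\<Union>k\<in>{1..}. wt_space sc Y \<omega> k) \<subseteq> (\<lambda>v. YW v (-1) w) -` ?P"
    by (intro V.span_minimal module_hom.subspace_vimage[OF mode_hom_left] W.subspace_span)
  then show "YW v (-1) w \<in> ?P" using v by blast
qed

lemma generated_submodule:
  "submodule scW YW (generated_submodule scW YW S)" "S \<subseteq> generated_submodule scW YW S"
  unfolding generated_submodule_def submodule_def by (auto intro!: W.subspace_Inter)

lemma grade_subset_submodule: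
  assumes S_homogeneous: "S \<subseteq> (\<Union>n. G n)"
    and spans: "W.span (S \<union> (\<Union>m. C1_part m)) = UNIV"
    and U: "submodule scW YW U" "S \<subseteq> U"
  shows "G n \<subseteq> U"
proof (induction n rule: less_induct)
  case (less n)
  define A where "A m = (S \<inter> G m) \<union> C1_part m" for m
  have "A m \<subseteq> G m" for m
    using C1_part_subset_grade by (auto simp: A_def)
  moreover have "W.span (\<Union>m. A m) = UNIV"
    using spans W.span_mono[of "S \<union> (\<Union>m. C1_part m)" "\<Union>m. A m"] S_homogeneous
    by (auto simp: A_def)
  ultimately have "G n \<subseteq> W.span (A n)"
    using W.direct_sum_component_span[where G = G, OF grade_subspace grade_independent] by blast
  moreover have "C1_part n \<subseteq> U"
  proof
    fix x assume "x \<in> C1_part n"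
    then obtain v u k m where x: "x = YW v (-1) u" and "1 \<le> k" "u \<in> G m" "m + nat k = n"
      unfolding C1_part_def by blast
    then have "m < n" by linarith
    then have "u \<in> U" using less.IH \<open>u \<in> G m\<close> by blast
    then show "x \<in> U" using U(1) x by (simp add: submodule_def)
  qed
  then have "W.span (A n) \<subseteq> U"
    using U by (intro W.span_minimal) (auto simp: A_def submodule_def)
  ultimately show ?case by blast
qed

theorem finitely_generated_if_C1_cofinite:
  assumes "C1_cofinite sc Y \<omega> scW YW"
  shows "finitely_generated scW YW"
proof -
  obtain S where "finite S" and S_spans: "W.span (S \<union> C1 sc Y \<omega> scW YW) = UNIV"
    using assms unfolding C1_cofinite_def by blast
  then obtain S' where "finite S'" and S'_homogeneous: "S' \<subseteq> (\<Union>n. G n)" and "S \<subseteq> W.span S'"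
    using W.finite_subset_span_finite[of S "\<Union>n. G n"] span_grades by auto
  then have "S \<union> C1 sc Y \<omega> scW YW \<subseteq> W.span (S' \<union> (\<Union>m. C1_part m))"
    using C1_subset_span_C1_part W.span_mono[of S' "S' \<union> (\<Union>m. C1_part m)"]
      W.span_mono[of "\<Union>m. C1_part m" "S' \<union> (\<Union>m. C1_part m)"] by blast
  then have "W.span (S' \<union> (\<Union>m. C1_part m)) = UNIV"
    using S_spans W.span_minimal[of "S \<union> C1 sc Y \<omega> scW YW"] by auto
  then have "G n \<subseteq> generated_submodule scW YW S'" for n
    using grade_subset_submodule[OF S'_homogeneous] generated_submodule by blast
  then have "W.span (\<Union>n. G n) \<subseteq> generated_submodule scW YW S'"
    using generated_submodule(1)[of S'] by (intro W.span_minimal) (auto simp: submodule_def)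
  then show ?thesis
    using \<open>finite S'\<close> span_grades unfolding finitely_generated_def by auto
qed

end

theorem proposition2:
  fixes sc :: "complex \<Rightarrow> 'v::ab_group_add \<Rightarrow> 'v"
    and Y :: "'v \<Rightarrow> int \<Rightarrow> 'v \<Rightarrow> 'v"
    and vac \<omega> :: 'v and c :: complex
    and scW :: "complex \<Rightarrow> 'w::ab_group_add \<Rightarrow> 'w"
    and YW :: "'v \<Rightarrow> int \<Rightarrow> 'w \<Rightarrow> 'w"
  assumes "vertex_operator_algebra sc Y vac \<omega> c"
    and "weak_module sc Y vac scW YW"
    and "N_gradable sc Y \<omega> scW YW"
    and "C1_cofinite sc Y \<omega> scW YW"
  shows "finitely_generated scW YW"
proof -
  have "vector_space sc" using assms(1) by (simp add: vertex_operator_algebra_def)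
  moreover have "vector_space scW" "modes_linear sc scW YW"
    using assms(2) by (simp_all add: weak_module_def)
  ultimately obtain G where "N_graded_weak_module sc scW Y \<omega> YW G"
    using assms(3)
    unfolding N_gradable_def N_graded_weak_module_def N_graded_weak_module_axioms_def by blast
  then show ?thesis
    using N_graded_weak_module.finitely_generated_if_C1_cofinite assms(4) by blast
qed

end
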